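(* Let $\mathbb{k}$ be a field of characteristic $0$ containing a primitive $n$-th root of unity $\omega$, let $H=T_{n^2}(\omega)$ be the Taft Hopf algebra, let $A=\mathbb{k}[z]/(z^n-\omega)$ with $u$ the image of $z$, let $a_i=(\omega-1)^i\omega^{i(i+1)/2}$, and let $$\rho(u)=\sum_{i=0}^{n-1}a_i\,x^ig^{-(i+1)}\otimes u^{i+1}\in H\otimes A .$$ Then for every $1\le s\le n$, in the algebra $H\otimes A$, $$\rho(u)^s=\sum_{k=0}^{n-1}a_k\Big(\sum_{\{0\le i_1,\dots,i_s\le k\ \mid\ \sum_{j=1}^s i_j=k\}}\omega^{\sum_{j=2}^s i_j(j-1)}\Big)\,x^kg^{-(k+s)}\otimes u^{k+s}.$$
   Context: The Taft Hopf algebra is $H=T_{n^2}(\omega)=\mathbb{k}\langle x,g\mid x^n=0,\ g^n=1,\ xg=\omega gx\rangle$ with $\Delta(g)=g\otimes g$, $\Delta(x)=x\otimes 1+g\otimes x$, $\epsilon(g)=1$, $\epsilon(x)=0$. $H\otimes A$ carries the tensor product algebra structure. *)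

theory Defs
  imports Main "HOL-Library.FuncSet"
begin

definition primitive_root :: "nat \<Rightarrow> 'k::field \<Rightarrow> bool" where
  "primitive_root n w \<longleftrightarrow> 0 < n \<and> w ^ n = 1 \<and> (\<forall>m. 0 < m \<and> m < n \<longrightarrow> w ^ m \<noteq> 1)"

text \<open>Concrete model of the Taft algebra H = T_{n^2}(w) via its basis x^i g^j (i,j < n):
  an element is its coefficient function p i j (zero outside i,j < n).
  Structure constants: x^i1 g^j1 * x^i2 g^j2 = w^(-j1*i2) x^(i1+i2) g^((j1+j2) mod n),
  where x^(i1+i2) = 0 if i1+i2 \<ge> n (from x g = w g x, g^n = 1, x^n = 0).\<close>
definition cH :: "nat \<Rightarrow> 'k::field \<Rightarrow> nat \<Rightarrow> nat \<Rightarrow> nat \<Rightarrow> nat \<Rightarrow> nat \<Rightarrow> nat \<Rightarrow> 'k" where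
  "cH n w i1 j1 i2 j2 i j =
     (if i1 + i2 = i \<and> (j1 + j2) mod n = j then (inverse w) ^ (j1 * i2) else 0)"

definition mulH :: "nat \<Rightarrow> 'k::field \<Rightarrow> (nat \<Rightarrow> nat \<Rightarrow> 'k) \<Rightarrow> (nat \<Rightarrow> nat \<Rightarrow> 'k) \<Rightarrow> (nat \<Rightarrow> nat \<Rightarrow> 'k)" where
  "mulH n w p q = (\<lambda>i j. if i < n \<and> j < n then
      (\<Sum>i1<n. \<Sum>j1<n. \<Sum>i2<n. \<Sum>j2<n. cH n w i1 j1 i2 j2 i j * p i1 j1 * q i2 j2) else 0)"

definition oneH :: "nat \<Rightarrow> nat \<Rightarrow> nat \<Rightarrow> 'k::field" where
  "oneH n = (\<lambda>i j. if i = 0 \<and> j = 0 then 1 else 0)"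

text \<open>Generators x, g and g^{-1} (= g^(n-1) since g^n = 1).\<close>
definition xH :: "nat \<Rightarrow> nat \<Rightarrow> nat \<Rightarrow> 'k::field" where
  "xH n = (\<lambda>i j. if i = 1 \<and> j = 0 \<and> 1 < n then 1 else 0)"

definition gH :: "nat \<Rightarrow> nat \<Rightarrow> nat \<Rightarrow> 'k::field" where
  "gH n = (\<lambda>i j. if i = 0 \<and> j = 1 mod n then 1 else 0)"

definition ginvH :: "nat \<Rightarrow> nat \<Rightarrow> nat \<Rightarrow> 'k::field" where
  "ginvH n = (\<lambda>i j. if i = 0 \<and> j = n - 1 then 1 else 0)"

primrec powH :: "nat \<Rightarrow> 'k::field \<Rightarrow> (nat \<Rightarrow> nat \<Rightarrow> 'k) \<Rightarrow> nat \<Rightarrow> (nat \<Rightarrow> nat \<Rightarrow> 'k)" where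
  "powH n w p 0 = oneH n"
| "powH n w p (Suc k) = mulH n w p (powH n w p k)"

text \<open>Concrete model of A = k[z]/(z^n - w) via its basis u^m (m < n):
  u^m1 * u^m2 = w^((m1+m2) div n) u^((m1+m2) mod n).\<close>
definition cA :: "nat \<Rightarrow> 'k::field \<Rightarrow> nat \<Rightarrow> nat \<Rightarrow> nat \<Rightarrow> 'k" where
  "cA n w m1 m2 m = (if (m1 + m2) mod n = m then w ^ ((m1 + m2) div n) else 0)"

definition mulA :: "nat \<Rightarrow> 'k::field \<Rightarrow> (nat \<Rightarrow> 'k) \<Rightarrow> (nat \<Rightarrow> 'k) \<Rightarrow> (nat \<Rightarrow> 'k)" where
  "mulA n w a b = (\<lambda>m. if m < n then (\<Sum>m1<n. \<Sum>m2<n. cA n w m1 m2 m * a m1 * b m2) else 0)"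

definition oneA :: "nat \<Rightarrow> nat \<Rightarrow> 'k::field" where
  "oneA n = (\<lambda>m. if m = 0 then 1 else 0)"

text \<open>u = image of z, i.e. z reduced: w^(1 div n) u^(1 mod n).\<close>
definition uA :: "nat \<Rightarrow> 'k::field \<Rightarrow> nat \<Rightarrow> 'k" where
  "uA n w = (\<lambda>m. if m = 1 mod n then w ^ (1 div n) else 0)"

primrec powA :: "nat \<Rightarrow> 'k::field \<Rightarrow> (nat \<Rightarrow> 'k) \<Rightarrow> nat \<Rightarrow> (nat \<Rightarrow> 'k)" where
  "powA n w a 0 = oneA n"
| "powA n w a (Suc k) = mulA n w a (powA n w a k)"

text \<open>Tensor product algebra H \<otimes> A with basis x^i g^j \<otimes> u^m (i,j,m < n);
  an element is its coefficient function F i j m.  Multiplication is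
  (h \<otimes> a)(h' \<otimes> a') = h h' \<otimes> a a', i.e. structure constants cH * cA.\<close>
definition tens :: "(nat \<Rightarrow> nat \<Rightarrow> 'k::field) \<Rightarrow> (nat \<Rightarrow> 'k) \<Rightarrow> nat \<Rightarrow> nat \<Rightarrow> nat \<Rightarrow> 'k" where
  "tens p a = (\<lambda>i j m. p i j * a m)"

definition mulHA :: "nat \<Rightarrow> 'k::field \<Rightarrow> (nat \<Rightarrow> nat \<Rightarrow> nat \<Rightarrow> 'k) \<Rightarrow> (nat \<Rightarrow> nat \<Rightarrow> nat \<Rightarrow> 'k)
     \<Rightarrow> (nat \<Rightarrow> nat \<Rightarrow> nat \<Rightarrow> 'k)" where
  "mulHA n w F G = (\<lambda>i j m. if i < n \<and> j < n \<and> m < n then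
      (\<Sum>i1<n. \<Sum>j1<n. \<Sum>m1<n. \<Sum>i2<n. \<Sum>j2<n. \<Sum>m2<n.
         cH n w i1 j1 i2 j2 i j * cA n w m1 m2 m * F i1 j1 m1 * G i2 j2 m2) else 0)"

definition oneHA :: "nat \<Rightarrow> nat \<Rightarrow> nat \<Rightarrow> nat \<Rightarrow> 'k::field" where
  "oneHA n = tens (oneH n) (oneA n)"

primrec powHA :: "nat \<Rightarrow> 'k::field \<Rightarrow> (nat \<Rightarrow> nat \<Rightarrow> nat \<Rightarrow> 'k) \<Rightarrow> nat \<Rightarrow> (nat \<Rightarrow> nat \<Rightarrow> nat \<Rightarrow> 'k)" where
  "powHA n w F 0 = oneHA n"
| "powHA n w F (Suc k) = mulHA n w F (powHA n w F k)"

definition taft_a :: "'k::field \<Rightarrow> nat \<Rightarrow> 'k" where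
  "taft_a w i = (w - 1) ^ i * w ^ (i * (i + 1) div 2)"

definition rho :: "nat \<Rightarrow> 'k::field \<Rightarrow> nat \<Rightarrow> nat \<Rightarrow> nat \<Rightarrow> 'k" where
  "rho n w = (\<lambda>i j m. \<Sum>l<n. taft_a w l *
      tens (mulH n w (powH n w (xH n) l) (powH n w (ginvH n) (l + 1))) (powA n w (uA n w) (l + 1)) i j m)"

end

theory Submission
  imports Defs
begin

text \<open>The element \<rho>(u) is a linear combination of the monomials x^l g^-(l+1) \<otimes> u^(l+1),
  and monomials multiply by the commutation rule g^-t x^k = \<omega>^(t k) x^k g^-t, the product
  vanishing once the degree in x reaches n. Expanding \<rho>(u)^(s+1) = \<rho>(u) \<rho>(u)^s and using
  a_l a_k \<omega>^((l+1) k) = a_(l+k) \<omega>^k, the coefficient of the K-th monomial becomes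
  a_K \<Sum>_(l \<le> K) \<omega>^(K-l) C_s(K-l). This is the recursion satisfied by the weighted count C_s(K)
  of compositions of K into s parts, obtained by splitting off the first part.\<close>

lemma sum_lessThan_eq_single:
  assumes "a < (n::nat)" and "\<And>x. x \<noteq> a \<Longrightarrow> f x = 0"
  shows "(\<Sum>x<n. f x) = f a"
  using assms by (subst sum.mono_neutral_right[of "{..<n}" "{a}"]) auto

lemma sum_swap3:
  "(\<Sum>x\<in>A. \<Sum>y\<in>B. \<Sum>z\<in>C. h x y z) = (\<Sum>y\<in>B. \<Sum>z\<in>C. \<Sum>x\<in>A. h x y z)"
  by (subst sum.swap) (rule sum.cong[OF refl], rule sum.swap)

lemma power_mod_order:
  fixes w :: "'a::monoid_mult"
  assumes "w ^ n = 1"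
  shows "w ^ a = w ^ (a mod n)"
proof -
  have "w ^ a = (w ^ n) ^ (a div n) * w ^ (a mod n)"
    by (simp flip: power_mult power_add)
  then show ?thesis using assms by simp
qed

lemma triangle_number_add:
  "(l + k) * (l + k + 1) div 2 = l * (l + 1) div 2 + k * (k + 1) div 2 + l * (k :: nat)"
proof -
  obtain a b where a: "l * (l + 1) = 2 * a" and b: "k * (k + 1) = 2 * b"
    by (metis dvd_def even_mult_iff even_add odd_one)
  have "(l + k) * (l + k + 1) = 2 * (a + b + l * k)"
    using a b by (simp add: algebra_simps)
  then show ?thesis unfolding a b by simp
qed

lemma sum_lessThan_triangle:
  fixes g :: "nat \<Rightarrow> nat \<Rightarrow> 'a::comm_monoid_add"
  shows "(\<Sum>l<n. \<Sum>k<n. if l + k < n then g l k else 0) = (\<Sum>K<n. \<Sum>l\<le>K. g l (K - l))"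
proof -
  have "(\<Sum>l<n. \<Sum>k<n. if l + k < n then g l k else 0)
      = (\<Sum>(l, k)\<in>{..<n} \<times> {..<n}. if l + k < n then g l k else 0)"
    by (rule sum.cartesian_product)
  also have "\<dots> = (\<Sum>(l, k)\<in>{(l, k). l + k < n}. g l k)"
    by (rule sum.mono_neutral_cong_right) (auto split: if_splits)
  also have "\<dots> = (\<Sum>K<n. \<Sum>l\<le>K. g l (K - l))"
    by (rule sum.triangle_reindex)
  finally show ?thesis .
qed

definition monomH :: "nat \<Rightarrow> nat \<Rightarrow> nat \<Rightarrow> nat \<Rightarrow> nat \<Rightarrow> 'k::field" where
  "monomH n k J = (\<lambda>i j. if i = k \<and> j = J mod n \<and> k < n then 1 else 0)"

text \<open>The monomial u^M, reduced by means of u^n = w.\<close>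
definition monomA :: "nat \<Rightarrow> 'k::field \<Rightarrow> nat \<Rightarrow> nat \<Rightarrow> 'k" where
  "monomA n w M = (\<lambda>m. if m = M mod n then w ^ (M div n) else 0)"

lemma mulH_monomH:
  assumes "n > 0"
  shows "mulH n w (monomH n k1 J1) (monomH n k2 J2) i j =
    (if k1 + k2 < n then inverse w ^ ((J1 mod n) * k2) * monomH n (k1 + k2) (J1 + J2) i j else 0)"
proof (cases "k1 < n \<and> k2 < n")
  case False
  then show ?thesis unfolding mulH_def monomH_def by auto
next
  case True
  have "mulH n w (monomH n k1 J1) (monomH n k2 J2) i j =
    (if i < n \<and> j < n then cH n w k1 (J1 mod n) k2 (J2 mod n) i j else 0)"
    unfolding mulH_def monomH_def using True assms
    by (simp add: sum_lessThan_eq_single[where a = k1] sum_lessThan_eq_single[where a = k2]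
        sum_lessThan_eq_single[where a = "J1 mod n"] sum_lessThan_eq_single[where a = "J2 mod n"])
  then show ?thesis
    unfolding cH_def monomH_def using assms by (auto simp: mod_add_eq)
qed

lemma mulA_monomA:
  assumes "n > 0"
  shows "mulA n w (monomA n w M1) (monomA n w M2) = monomA n w (M1 + M2)"
proof
  fix m
  have carry: "(M1 + M2) div n = M1 div n + M2 div n + (M1 mod n + M2 mod n) div n"
    by (rule div_add1_eq)
  have "mulA n w (monomA n w M1) (monomA n w M2) m =
    (if m < n then cA n w (M1 mod n) (M2 mod n) m * w ^ (M1 div n) * w ^ (M2 div n) else 0)"
    unfolding mulA_def monomA_def using assms
    by (simp add: sum_lessThan_eq_single[where a = "M1 mod n"] sum_lessThan_eq_single[where a = "M2 mod n"])
  also have "\<dots> = monomA n w (M1 + M2) m"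
    unfolding cA_def monomA_def carry using assms by (auto simp: mod_add_eq power_add)
  finally show "mulA n w (monomA n w M1) (monomA n w M2) m = monomA n w (M1 + M2) m" .
qed

lemma powH_xH: "n > 0 \<Longrightarrow> powH n w (xH n) k = monomH n k 0"
proof (induction k)
  case (Suc k)
  have x: "xH n = monomH n 1 0" by (auto simp: xH_def monomH_def)
  from Suc show ?case by (auto simp: x mulH_monomH intro!: ext) (auto simp: monomH_def)
qed (auto simp: oneH_def monomH_def)

lemma powH_ginvH: "n > 0 \<Longrightarrow> powH n w (ginvH n) t = monomH n 0 (t * (n - 1))"
proof (induction t)
  case (Suc t)
  then have g: "ginvH n = monomH n 0 (n - 1)" by (auto simp: ginvH_def monomH_def)
  from Suc show ?case by (auto simp: g mulH_monomH intro!: ext)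
qed (auto simp: oneH_def monomH_def)

lemma powA_uA: "n > 0 \<Longrightarrow> powA n w (uA n w) M = monomA n w M"
proof (induction M)
  case (Suc M)
  have u: "uA n w = monomA n w 1" by (auto simp: uA_def monomA_def)
  from Suc show ?case by (simp add: u mulA_monomA)
qed (auto simp: oneA_def monomA_def)

lemma mulHA_tens:
  "mulHA n w (tens p a) (tens q b) = tens (mulH n w p q) (mulA n w a b)"
proof (intro ext)
  fix i j m
  have "(\<Sum>i1<n. \<Sum>j1<n. \<Sum>m1<n. \<Sum>i2<n. \<Sum>j2<n. \<Sum>m2<n.
           cH n w i1 j1 i2 j2 i j * cA n w m1 m2 m * (p i1 j1 * a m1) * (q i2 j2 * b m2))
      = (\<Sum>i1<n. \<Sum>j1<n. \<Sum>i2<n. \<Sum>j2<n. \<Sum>m1<n. \<Sum>m2<n.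
           (cH n w i1 j1 i2 j2 i j * p i1 j1 * q i2 j2) * (cA n w m1 m2 m * a m1 * b m2))"
    by (rule sum.cong[OF refl], rule sum.cong[OF refl], subst sum_swap3) (simp add: ac_simps)
  also have "\<dots> = (\<Sum>i1<n. \<Sum>j1<n. \<Sum>i2<n. \<Sum>j2<n. cH n w i1 j1 i2 j2 i j * p i1 j1 * q i2 j2)
      * (\<Sum>m1<n. \<Sum>m2<n. cA n w m1 m2 m * a m1 * b m2)"
    unfolding sum_distrib_right by (simp only: sum_distrib_left)
  finally show "mulHA n w (tens p a) (tens q b) i j m = tens (mulH n w p q) (mulA n w a b) i j m"
    unfolding mulHA_def tens_def mulH_def mulA_def by simp
qed

definition monomHA :: "nat \<Rightarrow> 'k::field \<Rightarrow> nat \<Rightarrow> nat \<Rightarrow> nat \<Rightarrow> nat \<Rightarrow> nat \<Rightarrow> nat \<Rightarrow> 'k" where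
  "monomHA n w k t M =
     tens (mulH n w (powH n w (xH n) k) (powH n w (ginvH n) t)) (powA n w (uA n w) M)"

lemma monomHA_eq:
  assumes "n > 0"
  shows "monomHA n w k t M = tens (monomH n k (t * (n - 1))) (monomA n w M)"
proof -
  have "mulH n w (monomH n k 0) (monomH n 0 J) = monomH n k J" for J
    using assms by (auto simp: mulH_monomH intro!: ext) (auto simp: monomH_def)
  then show ?thesis
    using assms by (simp add: monomHA_def powH_xH powH_ginvH powA_uA)
qed

lemma inverse_power_mult_pred_mod:
  fixes w :: "'k::field"
  assumes "w ^ n = 1" and "n > 0"
  shows "inverse w ^ (t * (n - 1) mod n) = w ^ t"
proof -
  have "t * (n - 1) + t = n * t" using \<open>n > 0\<close> by (cases n) auto
  then have "w ^ (t * (n - 1)) * w ^ t = (w ^ n) ^ t"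
    by (metis power_add power_mult)
  then have "w ^ (t * (n - 1)) * w ^ t = 1"
    using assms(1) by simp
  then have "w ^ t = inverse (w ^ (t * (n - 1)))"
    by (simp add: inverse_unique mult.commute)
  also have "\<dots> = inverse w ^ (t * (n - 1) mod n)"
    by (subst power_mod_order[OF assms(1)]) (simp add: power_inverse)
  finally show ?thesis ..
qed

text \<open>The commutation rule g^-t x^k = w^(t k) x^k g^-t; here g^-1 is stored as g^(n-1).\<close>
lemma mulHA_monomHA:
  assumes "w ^ n = 1" and "n > 0"
  shows "mulHA n w (monomHA n w k1 t1 M1) (monomHA n w k2 t2 M2) i j m =
    (if k1 + k2 < n then w ^ (t1 * k2) * monomHA n w (k1 + k2) (t1 + t2) (M1 + M2) i j m else 0)"
proof -
  have "inverse w ^ ((t1 * (n - 1) mod n) * k2) = w ^ (t1 * k2)"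
    by (simp only: power_mult inverse_power_mult_pred_mod[OF assms])
  then show ?thesis
    unfolding monomHA_eq[OF assms(2)] mulHA_tens mulA_monomA[OF assms(2)]
    by (simp add: tens_def mulH_monomH[OF assms(2)] add_mult_distrib)
qed

lemma mulHA_add_left:
  "mulHA n w (\<lambda>i j m. a * F i j m + G i j m) H i j m = a * mulHA n w F H i j m + mulHA n w G H i j m"
  unfolding mulHA_def by (auto simp: sum.distrib sum_distrib_left algebra_simps)

lemma mulHA_add_right:
  "mulHA n w H (\<lambda>i j m. a * F i j m + G i j m) i j m = a * mulHA n w H F i j m + mulHA n w H G i j m"
  unfolding mulHA_def by (auto simp: sum.distrib sum_distrib_left algebra_simps)

lemma mulHA_sum_left:
  "finite L \<Longrightarrow>
    mulHA n w (\<lambda>i j m. \<Sum>l\<in>L. c l * F l i j m) G i j m = (\<Sum>l\<in>L. c l * mulHA n w (F l) G i j m)"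
  by (induction L rule: finite_induct) (simp add: mulHA_def, simp add: mulHA_add_left)

lemma mulHA_sum_right:
  "finite L \<Longrightarrow>
    mulHA n w G (\<lambda>i j m. \<Sum>l\<in>L. c l * F l i j m) i j m = (\<Sum>l\<in>L. c l * mulHA n w G (F l) i j m)"
  by (induction L rule: finite_induct) (simp add: mulHA_def, simp add: mulHA_add_right)

definition compositions :: "nat \<Rightarrow> nat \<Rightarrow> (nat \<Rightarrow> nat) set" where
  "compositions s k = {f \<in> PiE {1..s} (\<lambda>_. {0..k}). (\<Sum>j\<in>{1..s}. f j) = k}"

definition composition_weight :: "'a::comm_semiring_1 \<Rightarrow> nat \<Rightarrow> nat \<Rightarrow> 'a" where
  "composition_weight w s k = (\<Sum>f\<in>compositions s k. w ^ (\<Sum>j\<in>{2..s}. f j * (j - 1)))"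

lemma finite_compositions: "finite (compositions s k)"
  unfolding compositions_def by (rule finite_subset[of _ "PiE {1..s} (\<lambda>_. {0..k})"]) (auto simp: finite_PiE)

lemma composition_weight_0: "composition_weight w 0 k = (if k = 0 then 1 else 0)"
proof -
  have "compositions 0 k = (if k = 0 then {\<lambda>_. undefined} else {})"
    unfolding compositions_def by auto
  then show ?thesis by (simp add: composition_weight_def)
qed

lemma sum_atLeast1_Suc: "(\<Sum>j\<in>{1..Suc s}. f j) = f 1 + (\<Sum>j\<in>{1..s}. f (Suc j))"
  by (simp only: sum.atLeast_Suc_atMost[of 1 "Suc s"] sum.shift_bounds_cl_Suc_ivl)

lemma composition_exponent_Suc:
  "(\<Sum>j\<in>{2..Suc s}. f j * (j - 1)) = (\<Sum>j\<in>{1..s}. f (Suc j) * j)"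
  unfolding numeral_2_eq_2 One_nat_def sum.shift_bounds_cl_Suc_ivl by simp

lemma composition_exponent_atLeast1:
  "(\<Sum>j\<in>{2..s}. f j * (j - 1 :: nat)) = (\<Sum>j\<in>{1..s}. f j * (j - 1))"
proof (cases s)
  case (Suc t)
  then show ?thesis by (subst (2) sum.atLeast_Suc_atMost) (simp_all add: numeral_2_eq_2)
qed simp

lemma bij_betw_compositions_Suc:
  "bij_betw (\<lambda>f. (f 1, restrict (\<lambda>j. f (Suc j)) {1..s}))
     (compositions (Suc s) k) (SIGMA l:{..k}. compositions s (k - l))"
proof -
  let ?split = "\<lambda>f. (f 1, restrict (\<lambda>j. f (Suc j)) {1..s})"
  define join :: "nat \<times> (nat \<Rightarrow> nat) \<Rightarrow> nat \<Rightarrow> nat" where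
    "join = (\<lambda>(l, g) j. if j = 1 then l else if j \<in> {2..Suc s} then g (j - 1) else undefined)"
  have split_mem: "?split f \<in> (SIGMA l:{..k}. compositions s (k - l))" and join_split: "join (?split f) = f"
    if "f \<in> compositions (Suc s) k" for f
  proof -
    have f: "f \<in> PiE {1..Suc s} (\<lambda>_. {0..k})" and "(\<Sum>j\<in>{1..Suc s}. f j) = k"
      using that by (auto simp: compositions_def)
    then have sum: "f 1 + (\<Sum>j\<in>{1..s}. f (Suc j)) = k"
      by (simp only: sum_atLeast1_Suc)
    have "f (Suc j) \<le> k - f 1" if "j \<in> {1..s}" for j
      using member_le_sum[of j "{1..s}" "\<lambda>j. f (Suc j)"] that sum by auto
    with sum show "?split f \<in> (SIGMA l:{..k}. compositions s (k - l))"
      unfolding compositions_def by auto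
    show "join (?split f) = f"
      using f by (auto simp: join_def PiE_def extensional_def intro!: ext)
  qed
  have join_mem: "join (l, g) \<in> compositions (Suc s) k" and split_join: "?split (join (l, g)) = (l, g)"
    if "(l, g) \<in> (SIGMA l:{..k}. compositions s (k - l))" for l g
  proof -
    have "l \<le> k" and g: "g \<in> PiE {1..s} (\<lambda>_. {0..k - l})" and "(\<Sum>j\<in>{1..s}. g j) = k - l"
      using that by (auto simp: compositions_def)
    moreover have "(\<Sum>j\<in>{1..s}. join (l, g) (Suc j)) = (\<Sum>j\<in>{1..s}. g j)"
      by (intro sum.cong) (auto simp: join_def)
    moreover have "join (l, g) \<in> PiE {1..Suc s} (\<lambda>_. {0..k})"
    proof (rule PiE_I)
      fix j assume j: "j \<in> {1..Suc s}"
      show "join (l, g) j \<in> {0..k}"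
      proof (cases "j = 1")
        case False
        with j have "g (j - 1) \<in> {0..k - l}" by (intro PiE_mem[OF g]) auto
        with False j show ?thesis by (auto simp: join_def)
      qed (simp add: join_def \<open>l \<le> k\<close>)
    qed (auto simp: join_def)
    ultimately show "join (l, g) \<in> compositions (Suc s) k"
      unfolding compositions_def sum_atLeast1_Suc by (simp add: join_def)
    show "?split (join (l, g)) = (l, g)"
      using g by (auto simp: join_def PiE_def extensional_def intro!: ext)
  qed
  show ?thesis
    by (rule bij_betw_byWitness[where f' = join]) (use split_mem join_split join_mem split_join in auto)
qed

lemma composition_exponent_split:
  assumes "f \<in> compositions (Suc s) k"
  shows "(\<Sum>j\<in>{2..Suc s}. f j * (j - 1))
    = (\<Sum>j\<in>{2..s}. restrict (\<lambda>j. f (Suc j)) {1..s} j * (j - 1)) + (k - f 1)"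
proof -
  have k: "k - f 1 = (\<Sum>j\<in>{1..s}. f (Suc j))"
    using assms unfolding compositions_def sum_atLeast1_Suc by auto
  have "(\<Sum>j\<in>{2..Suc s}. f j * (j - 1)) = (\<Sum>j\<in>{1..s}. f (Suc j) * j)"
    by (rule composition_exponent_Suc)
  also have "\<dots> = (\<Sum>j\<in>{1..s}. f (Suc j) * (j - 1)) + (\<Sum>j\<in>{1..s}. f (Suc j))"
    unfolding sum.distrib[symmetric] by (rule sum.cong) (auto simp: algebra_simps)
  also have "(\<Sum>j\<in>{1..s}. f (Suc j) * (j - 1)) = (\<Sum>j\<in>{2..s}. restrict (\<lambda>j. f (Suc j)) {1..s} j * (j - 1))"
    unfolding composition_exponent_atLeast1 by (rule sum.cong) auto
  finally show ?thesis unfolding k .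
qed

lemma composition_weight_Suc:
  "composition_weight w (Suc s) k = (\<Sum>l\<le>k. w ^ (k - l) * composition_weight w s (k - l))"
proof -
  have "composition_weight w (Suc s) k = (\<Sum>f\<in>compositions (Suc s) k.
      (\<lambda>(l, g). w ^ (k - l) * w ^ (\<Sum>j\<in>{2..s}. g j * (j - 1))) (f 1, restrict (\<lambda>j. f (Suc j)) {1..s}))"
    unfolding composition_weight_def
    by (rule sum.cong[OF refl]) (simp only: composition_exponent_split prod.case power_add mult.commute)
  also have "\<dots> = (\<Sum>(l, g)\<in>(SIGMA l:{..k}. compositions s (k - l)).
      w ^ (k - l) * w ^ (\<Sum>j\<in>{2..s}. g j * (j - 1)))"
    by (rule sum.reindex_bij_betw[OF bij_betw_compositions_Suc])
  also have "\<dots> = (\<Sum>l\<le>k. w ^ (k - l) * composition_weight w s (k - l))"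
    by (simp add: sum.Sigma[symmetric] finite_compositions composition_weight_def sum_distrib_left)
  finally show ?thesis .
qed

lemma taft_a_mult: "taft_a w l * taft_a w k * w ^ ((l + 1) * k) = taft_a w (l + k) * w ^ k"
proof -
  have e: "l * (l + 1) div 2 + k * (k + 1) div 2 + (l + 1) * k = (l + k) * (l + k + 1) div 2 + k"
    unfolding triangle_number_add by (simp add: algebra_simps)
  have "taft_a w l * taft_a w k * w ^ ((l + 1) * k) =
      (w - 1) ^ (l + k) * w ^ (l * (l + 1) div 2 + k * (k + 1) div 2 + (l + 1) * k)"
    unfolding taft_a_def power_add by (simp add: ac_simps)
  also have "\<dots> = taft_a w (l + k) * w ^ k"
    unfolding e taft_a_def power_add by (simp add: ac_simps)
  finally show ?thesis .
qed

lemma mulHA_rho_monomHA_sum: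
  assumes "w ^ n = 1" and "n > 0"
  shows "mulHA n w (rho n w) (\<lambda>i j m. \<Sum>k<n. c k * monomHA n w k (k + s) (k + s) i j m) i j m =
    (\<Sum>K<n. (\<Sum>l\<le>K. taft_a w l * w ^ ((l + 1) * (K - l)) * c (K - l))
       * monomHA n w K (K + Suc s) (K + Suc s) i j m)"
proof -
  define g where "g l k = taft_a w l * w ^ ((l + 1) * k) * c k
      * monomHA n w (l + k) (l + k + Suc s) (l + k + Suc s) i j m" for l k
  have rho: "rho n w = (\<lambda>i j m. \<Sum>l<n. taft_a w l * monomHA n w l (l + 1) (l + 1) i j m)"
    unfolding rho_def monomHA_def ..
  have "mulHA n w (rho n w) (\<lambda>i j m. \<Sum>k<n. c k * monomHA n w k (k + s) (k + s) i j m) i j m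
      = (\<Sum>l<n. \<Sum>k<n. taft_a w l * (c k *
          mulHA n w (monomHA n w l (l + 1) (l + 1)) (monomHA n w k (k + s) (k + s)) i j m))"
    unfolding rho by (simp add: mulHA_sum_left mulHA_sum_right sum_distrib_left)
  also have "\<dots> = (\<Sum>l<n. \<Sum>k<n. if l + k < n then g l k else 0)"
    by (intro sum.cong refl) (simp add: mulHA_monomHA[OF assms] g_def ac_simps)
  also have "\<dots> = (\<Sum>K<n. \<Sum>l\<le>K. g l (K - l))"
    by (rule sum_lessThan_triangle)
  also have "\<dots> = (\<Sum>K<n. (\<Sum>l\<le>K. taft_a w l * w ^ ((l + 1) * (K - l)) * c (K - l))
       * monomHA n w K (K + Suc s) (K + Suc s) i j m)"
    by (intro sum.cong refl) (simp add: g_def sum_distrib_right)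
  finally show ?thesis .
qed

lemma powHA_rho:
  assumes "w ^ n = 1" and "n > 0"
  shows "powHA n w (rho n w) s = (\<lambda>i j m. \<Sum>k<n. taft_a w k * composition_weight w s k
           * monomHA n w k (k + s) (k + s) i j m)"
proof (induction s)
  case 0
  have "oneHA n = monomHA n w 0 0 0"
    using assms(2) by (auto simp: oneHA_def tens_def oneH_def oneA_def monomHA_eq monomH_def monomA_def intro!: ext)
  with assms(2) show ?case
    by (simp add: composition_weight_0 sum_lessThan_eq_single[where a = 0] taft_a_def)
next
  case (Suc s)
  have coeff: "(\<Sum>l\<le>K. taft_a w l * w ^ ((l + 1) * (K - l)) * (taft_a w (K - l) * composition_weight w s (K - l)))
      = taft_a w K * composition_weight w (Suc s) K" for K
  proof -
    have "taft_a w l * w ^ ((l + 1) * (K - l)) * (taft_a w (K - l) * composition_weight w s (K - l))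
        = taft_a w K * (w ^ (K - l) * composition_weight w s (K - l))" if "l \<in> {..K}" for l
      using taft_a_mult[of w l "K - l"] that by (simp add: ac_simps)
    then show ?thesis
      unfolding composition_weight_Suc sum_distrib_left by (rule sum.cong[OF refl])
  qed
  show ?case
  proof (intro ext)
    fix i j m
    show "powHA n w (rho n w) (Suc s) i j m = (\<Sum>k<n. taft_a w k * composition_weight w (Suc s) k
        * monomHA n w k (k + Suc s) (k + Suc s) i j m)"
      by (simp only: powHA.simps Suc.IH mulHA_rho_monomHA_sum[OF assms] coeff)
  qed
qed

theorem proposition3p6:
  fixes w :: "'k::field_char_0" and n s :: nat
  assumes "primitive_root n w" and "1 \<le> s" and "s \<le> n"
  shows "powHA n w (rho n w) s =
    (\<lambda>i j m. \<Sum>k<n. taft_a w k *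
       (\<Sum>f\<in>{f \<in> PiE {1..s} (\<lambda>_. {0..k}). (\<Sum>j\<in>{1..s}. f j) = k}.
           w ^ (\<Sum>j\<in>{2..s}. f j * (j - 1))) *
       tens (mulH n w (powH n w (xH n) k) (powH n w (ginvH n) (k + s)))
            (powA n w (uA n w) (k + s)) i j m)"
proof -
  have root: "w ^ n = 1" and "n > 0"
    using assms(1) unfolding primitive_root_def by auto
  show ?thesis
    unfolding powHA_rho[OF root \<open>n > 0\<close>] composition_weight_def compositions_def monomHA_def ..
qed

end
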